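(* Let $n\geq2$ and $N_n=\langle a\mid a^n=0\rangle$. (i) The identities satisfied by $N_n$ are axiomatized by $xy\approx yx$, $x^n\approx y_1y_2\cdots y_n$, and all identities $x_1^{e_1}x_2^{e_2}\cdots x_m^{e_m}\approx x_1^{f_1}x_2^{f_2}\cdots x_m^{f_m}$ with $m\geq1$, $e_1,\dots,e_m,f_1,\dots,f_m\geq1$ such that (a) $e=f<n$ where $e=\sum_{i=1}^me_i$ and $f=\sum_{i=1}^mf_i$, and (b) for each $k\in\{1,\dots,m\}$, either $e_k=f_k$ or $e+e_k,f+f_k\geq n$. (ii) The subpseudovariety of $\llbracket N_n\rrbracket$ defined by the identity $x^n\approx x^{n-1}$ is the unique maximal subpseudovariety of $\llbracket N_n\rrbracket$.
   Context: $N_n=\{0,a,\dots,a^{n-1}\}$ is the monogenic nilpotent semigroup of order $n$. Identities are between words over a countably infinite alphabet of variables with distinct letters $x,y,x_i,y_i$. A pseudovariety is a class of finite semigroups closed under finite direct products, subsemigroups and homomorphic images; $\llbracket S\rrbracket$ is the pseudovariety generated by $S$; a maximal subpseudovariety is a maximal proper subpseudovariety. *)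

theory Defs
  imports Main "HOL-Library.Nat_Bijection"
begin

record sg =
  carr :: "nat set"
  mul  :: "nat \<Rightarrow> nat \<Rightarrow> nat"

definition fin_semigroup :: "sg \<Rightarrow> bool" where
  "fin_semigroup S \<longleftrightarrow> finite (carr S) \<and> carr S \<noteq> {}
     \<and> (\<forall>x\<in>carr S. \<forall>y\<in>carr S. mul S x y \<in> carr S)
     \<and> (\<forall>x\<in>carr S. \<forall>y\<in>carr S. \<forall>z\<in>carr S.
            mul S (mul S x y) z = mul S x (mul S y z))"

definition subsg :: "sg \<Rightarrow> sg \<Rightarrow> bool" where
  "subsg T S \<longleftrightarrow> fin_semigroup T \<and> carr T \<subseteq> carr S
     \<and> (\<forall>x\<in>carr T. \<forall>y\<in>carr T. mul T x y = mul S x y)"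

definition hom_image :: "sg \<Rightarrow> sg \<Rightarrow> bool" where
  "hom_image T S \<longleftrightarrow> (\<exists>h. h ` carr S = carr T
     \<and> (\<forall>x\<in>carr S. \<forall>y\<in>carr S. h (mul S x y) = mul T (h x) (h y)))"

definition prod_sg :: "sg \<Rightarrow> sg \<Rightarrow> sg" where
  "prod_sg S T = \<lparr> carr = prod_encode ` (carr S \<times> carr T),
     mul = (\<lambda>p q. prod_encode (mul S (fst (prod_decode p)) (fst (prod_decode q)),
                                 mul T (snd (prod_decode p)) (snd (prod_decode q)))) \<rparr>"

definition pseudovariety :: "sg set \<Rightarrow> bool" where
  "pseudovariety V \<longleftrightarrow> V \<noteq> {} \<and> (\<forall>S\<in>V. fin_semigroup S)
     \<and> (\<forall>S\<in>V. \<forall>T\<in>V. prod_sg S T \<in> V)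
     \<and> (\<forall>S\<in>V. \<forall>T. subsg T S \<longrightarrow> T \<in> V)
     \<and> (\<forall>S\<in>V. \<forall>T. fin_semigroup T \<and> hom_image T S \<longrightarrow> T \<in> V)"

definition gen_pv :: "sg \<Rightarrow> sg set" where
  "gen_pv S = \<Inter>{V. pseudovariety V \<and> S \<in> V}"

definition maximal_subpv :: "sg set \<Rightarrow> sg set \<Rightarrow> bool" where
  "maximal_subpv V W \<longleftrightarrow> pseudovariety V \<and> V \<subset> W
     \<and> (\<forall>U. pseudovariety U \<and> V \<subseteq> U \<and> U \<subset> W \<longrightarrow> U = V)"

text \<open>N_n: a^k (1 \<le> k < n) is encoded by k, and 0 by n.\<close>
definition Nn :: "nat \<Rightarrow> sg" where
  "Nn n = \<lparr> carr = {1..n}, mul = (\<lambda>i j. min (i + j) n) \<rparr>"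

type_synonym word = "nat list"   \<comment> \<open>nonempty lists of variables\<close>

fun weval :: "sg \<Rightarrow> (nat \<Rightarrow> nat) \<Rightarrow> word \<Rightarrow> nat" where
  "weval S \<phi> [] = undefined"
| "weval S \<phi> [x] = \<phi> x"
| "weval S \<phi> (x # y # ys) = mul S (\<phi> x) (weval S \<phi> (y # ys))"

definition satisfies :: "sg \<Rightarrow> word \<times> word \<Rightarrow> bool" where
  "satisfies S uv \<longleftrightarrow> (\<forall>\<phi>. (\<forall>x. \<phi> x \<in> carr S) \<longrightarrow>
       weval S \<phi> (fst uv) = weval S \<phi> (snd uv))"

definition subst_word :: "(nat \<Rightarrow> word) \<Rightarrow> word \<Rightarrow> word" where
  "subst_word \<sigma> w = concat (map \<sigma> w)"

inductive derivable :: "(word \<times> word) set \<Rightarrow> word \<Rightarrow> word \<Rightarrow> bool"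
  for \<Sigma> where
  ax: "(u, v) \<in> \<Sigma> \<Longrightarrow> derivable \<Sigma> u v"
| refl: "u \<noteq> [] \<Longrightarrow> derivable \<Sigma> u u"
| sym: "derivable \<Sigma> u v \<Longrightarrow> derivable \<Sigma> v u"
| trans: "derivable \<Sigma> u v \<Longrightarrow> derivable \<Sigma> v w \<Longrightarrow> derivable \<Sigma> u w"
| subst: "derivable \<Sigma> u v \<Longrightarrow> (\<forall>x. \<sigma> x \<noteq> []) \<Longrightarrow>
          derivable \<Sigma> (subst_word \<sigma> u) (subst_word \<sigma> v)"
| mult: "derivable \<Sigma> u v \<Longrightarrow> derivable \<Sigma> u' v' \<Longrightarrow>
          derivable \<Sigma> (u @ u') (v @ v')"

definition eq_theory :: "sg \<Rightarrow> (word \<times> word) set" where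
  "eq_theory S = {(u, v). u \<noteq> [] \<and> v \<noteq> [] \<and> satisfies S (u, v)}"

definition pw :: "nat list \<Rightarrow> nat list \<Rightarrow> word" where
  "pw xs es = concat (map (\<lambda>(x, e). replicate e x) (zip xs es))"

definition Sigma_N :: "nat \<Rightarrow> (word \<times> word) set" where
  "Sigma_N n =
     {([x, y], [y, x]) | x y. x \<noteq> y}
   \<union> {(replicate n x, ys) | x ys. length ys = n \<and> distinct (x # ys)}
   \<union> {(pw xs es, pw xs fs) | xs es fs.
        let m = length xs; e = sum_list es; f = sum_list fs in
        m \<ge> 1 \<and> distinct xs \<and> length es = m \<and> length fs = m
        \<and> (\<forall>i<m. es ! i \<ge> 1 \<and> fs ! i \<ge> 1)
        \<and> e = f \<and> e < n
        \<and> (\<forall>k<m. es ! k = fs ! k \<or> (e + es ! k \<ge> n \<and> f + fs ! k \<ge> n))}"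

end

theory Submission
  imports Defs "HOL-Library.Multiset"
begin

text \<open>Assigning \<open>a\<^bsup>g x\<^esup>\<close> to each variable \<open>x\<close> evaluates a word \<open>u\<close> in \<open>N\<^sub>n\<close> to
  \<open>a\<^sup>k\<close> with \<open>k = min (g(u)) n\<close>, where \<open>g(u)\<close> is the total weight of the letters of \<open>u\<close>;
  so \<open>N\<^sub>n \<Turnstile> u \<approx> v\<close> says that all truncated weights of \<open>u\<close> and \<open>v\<close> agree, and the axioms
  are sound for this arithmetic condition. Conversely, words of length \<open>\<ge> n\<close> all equal \<open>x\<^sup>n\<close>
  by the second axiom. Shorter words with equal truncated weights have the same length and
  (weight \<open>n\<close> on a single letter) the same content, so after commuting letters they are
  \<open>x\<^sub>1\<^bsup>e\<^sub>1\<^esup>\<cdots>x\<^sub>m\<^bsup>e\<^sub>m\<^esup>\<close> and \<open>x\<^sub>1\<^bsup>f\<^sub>1\<^esup>\<cdots>x\<^sub>m\<^bsup>f\<^sub>m\<^esup>\<close>; weight \<open>2\<close> on \<open>x\<^sub>k\<close> gives condition (b).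

  Every member of \<open>\<lbrakk>N\<^sub>n\<rbrakk>\<close> satisfies \<open>x\<^bsup>n+1\<^esup> \<approx> x\<^sup>n\<close>. If such a \<open>T\<close> has an element
  \<open>a\<close> with \<open>a\<^sup>n \<noteq> a\<^bsup>n-1\<^esup>\<close>, the powers \<open>a, \<dots>, a\<^sup>n\<close> are distinct and form a copy of \<open>N\<^sub>n\<close>.
  Hence every subpseudovariety not contained in \<open>\<lbrakk>N\<^sub>n\<rbrakk> \<inter> \<lbrakk>x\<^sup>n \<approx> x\<^bsup>n-1\<^esup>\<rbrakk>\<close> is all of
  \<open>\<lbrakk>N\<^sub>n\<rbrakk>\<close>.\<close>

section \<open>Identities of \<open>N\<^sub>n\<close>\<close>

abbreviation wsum :: "(nat \<Rightarrow> nat) \<Rightarrow> word \<Rightarrow> nat" where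
  "wsum g u \<equiv> sum_list (map g u)"

definition trunc_equiv :: "nat \<Rightarrow> word \<Rightarrow> word \<Rightarrow> bool" where
  "trunc_equiv n u v \<longleftrightarrow> (\<forall>g. (\<forall>x. 1 \<le> g x) \<longrightarrow> min (wsum g u) n = min (wsum g v) n)"

lemma weval_Nn:
  assumes "\<forall>x. \<phi> x \<in> {1..n}" "u \<noteq> []"
  shows "weval (Nn n) \<phi> u = min (wsum \<phi> u) n"
  using assms by (induction "Nn n" \<phi> u rule: weval.induct) (auto simp: Nn_def)

lemma min_wsum_min: "min (wsum (\<lambda>x. min (g x) n) u) n = min (wsum g u) n"
proof -
  have "min (c + wsum (\<lambda>x. min (g x) n) u) n = min (c + wsum g u) n" for c
    by (induction u arbitrary: c) (simp_all add: min_def add.assoc[symmetric] split: if_splits)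
  from this[of 0] show ?thesis by simp
qed

lemma satisfies_Nn_iff:
  assumes "n \<ge> 1" "u \<noteq> []" "v \<noteq> []"
  shows "satisfies (Nn n) (u, v) \<longleftrightarrow> trunc_equiv n u v"
proof
  assume sat: "satisfies (Nn n) (u, v)"
  show "trunc_equiv n u v"
    unfolding trunc_equiv_def
  proof (intro allI impI)
    fix g :: "nat \<Rightarrow> nat"
    assume "\<forall>x. 1 \<le> g x"
    then have \<phi>: "\<forall>x. min (g x) n \<in> {1..n}" using assms(1) by auto
    with sat have "weval (Nn n) (\<lambda>x. min (g x) n) u = weval (Nn n) (\<lambda>x. min (g x) n) v"
      by (auto simp: satisfies_def Nn_def)
    then show "min (wsum g u) n = min (wsum g v) n"
      using assms(2,3) by (simp add: weval_Nn[OF \<phi>] min_wsum_min)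
  qed
next
  assume equiv: "trunc_equiv n u v"
  show "satisfies (Nn n) (u, v)"
    unfolding satisfies_def
  proof (intro allI impI)
    fix \<phi> :: "nat \<Rightarrow> nat"
    assume "\<forall>x. \<phi> x \<in> carr (Nn n)"
    then have \<phi>: "\<forall>x. \<phi> x \<in> {1..n}" by (simp add: Nn_def)
    then have "min (wsum \<phi> u) n = min (wsum \<phi> v) n"
      using equiv by (simp add: trunc_equiv_def)
    then show "weval (Nn n) \<phi> (fst (u, v)) = weval (Nn n) \<phi> (snd (u, v))"
      using assms(2,3) by (simp add: weval_Nn[OF \<phi>])
  qed
qed

lemma length_le_wsum: "\<forall>x. 1 \<le> g x \<Longrightarrow> length u \<le> wsum g u"
  using sum_list_mono[of u "\<lambda>_. 1" g] by (simp add: sum_list_triv)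

lemma trunc_equiv_append:
  assumes "trunc_equiv n u v" "trunc_equiv n u' v'"
  shows "trunc_equiv n (u @ u') (v @ v')"
  unfolding trunc_equiv_def
proof (intro allI impI)
  fix g :: "nat \<Rightarrow> nat"
  assume g: "\<forall>x. 1 \<le> g x"
  have "min (wsum g (u @ u')) n = min (min (wsum g u) n + min (wsum g u') n) n"
    by (simp add: min_def)
  also have "\<dots> = min (min (wsum g v) n + min (wsum g v') n) n"
    using assms g by (simp add: trunc_equiv_def)
  also have "\<dots> = min (wsum g (v @ v')) n"
    by (simp add: min_def)
  finally show "min (wsum g (u @ u')) n = min (wsum g (v @ v')) n" .
qed

lemma wsum_subst_word: "wsum g (subst_word \<sigma> u) = wsum (\<lambda>x. wsum g (\<sigma> x)) u"
  by (induction u) (simp_all add: subst_word_def)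

lemma trunc_equiv_subst:
  assumes "trunc_equiv n u v" "\<forall>x. \<sigma> x \<noteq> []"
  shows "trunc_equiv n (subst_word \<sigma> u) (subst_word \<sigma> v)"
  unfolding trunc_equiv_def wsum_subst_word
proof (intro allI impI)
  fix g :: "nat \<Rightarrow> nat"
  assume "\<forall>x. 1 \<le> g x"
  then have "\<forall>x. 1 \<le> wsum g (\<sigma> x)"
    using assms(2) length_le_wsum[of g] by (metis One_nat_def Suc_leI dual_order.trans length_greater_0_conv)
  then show "min (wsum (\<lambda>x. wsum g (\<sigma> x)) u) n = min (wsum (\<lambda>x. wsum g (\<sigma> x)) v) n"
    using assms(1) by (simp add: trunc_equiv_def)
qed

lemma pw_Cons: "pw (x # xs) (e # es) = replicate e x @ pw xs es"
  by (simp add: pw_def)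

lemma wsum_pw:
  "length es = length xs \<Longrightarrow> wsum g (pw xs es) = (\<Sum>i<length xs. es ! i * g (xs ! i))"
proof (induction xs arbitrary: es)
  case (Cons x xs)
  then obtain e es' where "es = e # es'" by (cases es) auto
  with Cons show ?case
    by (simp add: pw_Cons sum.lessThan_Suc_shift sum_list_replicate del: sum.lessThan_Suc)
qed (simp add: pw_def)

lemma length_pw: "length es = length xs \<Longrightarrow> length (pw xs es) = sum_list es"
  using wsum_pw[of es xs "\<lambda>_. 1"] by (simp add: sum_list_sum_nth atLeast0LessThan)

lemma pw_eq_Nil_iff:
  "length es = length xs \<Longrightarrow> \<forall>i<length xs. 1 \<le> es ! i \<Longrightarrow> pw xs es = [] \<longleftrightarrow> xs = []"
  by (cases xs; cases es) (auto simp: pw_def)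

text \<open>Write \<open>\<Sum> E i * G i = \<Sum> E i + \<Sum> E i * (G i - 1)\<close>: if some \<open>k\<close> with \<open>E k \<noteq> F k\<close> has
  \<open>G k \<ge> 2\<close>, the two sums are at least \<open>\<Sum> E i + E k\<close> and \<open>\<Sum> F i + F k\<close>, hence \<open>\<ge> n\<close>;
  otherwise the excess terms coincide.\<close>
lemma min_weighted_sums_eq:
  fixes E F G :: "nat \<Rightarrow> nat"
  assumes G: "\<forall>i<m. 1 \<le> G i"
    and EF: "(\<Sum>i<m. E i) = (\<Sum>i<m. F i)"
    and EF_k: "\<forall>k<m. E k = F k \<or> (n \<le> (\<Sum>i<m. E i) + E k \<and> n \<le> (\<Sum>i<m. F i) + F k)"
  shows "min (\<Sum>i<m. E i * G i) n = min (\<Sum>i<m. F i * G i) n"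
proof -
  have split: "(\<Sum>i<m. H i * G i) = (\<Sum>i<m. H i) + (\<Sum>i<m. H i * (G i - 1))" for H :: "nat \<Rightarrow> nat"
  proof -
    have "(\<Sum>i<m. H i * G i) = (\<Sum>i<m. H i + H i * (G i - 1))"
    proof (rule sum.cong)
      fix i assume "i \<in> {..<m}"
      then have "G i = Suc (G i - 1)" using G by auto
      then show "H i * G i = H i + H i * (G i - 1)" by (metis mult_Suc_right)
    qed simp
    then show ?thesis by (simp add: sum.distrib)
  qed
  show ?thesis
  proof (cases "\<exists>k<m. E k \<noteq> F k \<and> 2 \<le> G k")
    case True
    then obtain k where k: "k < m" "E k \<noteq> F k" "2 \<le> G k" by auto
    have big: "(\<Sum>i<m. H i) + H k \<le> (\<Sum>i<m. H i * G i)" for H :: "nat \<Rightarrow> nat"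
    proof -
      have "H k * 1 \<le> H k * (G k - 1)" using k(3) by (intro mult_le_mono2) simp
      also have "\<dots> \<le> (\<Sum>i<m. H i * (G i - 1))" using k(1) by (intro member_le_sum) auto
      finally show ?thesis unfolding split by simp
    qed
    have "n \<le> (\<Sum>i<m. E i * G i)" "n \<le> (\<Sum>i<m. F i * G i)"
      using big[of E] big[of F] EF_k k(1,2) by (meson order.trans)+
    then show ?thesis by simp
  next
    case False
    then have "(\<Sum>i<m. E i * (G i - 1)) = (\<Sum>i<m. F i * (G i - 1))"
      using G by (intro sum.cong) (auto simp: le_Suc_eq)
    then show ?thesis using EF by (simp add: split)
  qed
qed

lemma Sigma_N_sound:
  assumes "1 \<le> n" "(u, v) \<in> Sigma_N n"
  shows "u \<noteq> [] \<and> v \<noteq> [] \<and> trunc_equiv n u v"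
  using assms unfolding Sigma_N_def
proof (elim UnE CollectE exE conjE)
  fix x y
  assume "(u, v) = ([x, y], [y, x])"
  then show ?thesis by (simp add: trunc_equiv_def add.commute)
next
  fix x ys
  assume uv: "(u, v) = (replicate n x, ys)" "length ys = n"
  have "n \<le> wsum g u \<and> n \<le> wsum g v" if "\<forall>x. 1 \<le> g x" for g
    using uv length_le_wsum[OF that, of u] length_le_wsum[OF that, of v] by simp
  then show ?thesis
    using uv assms(1) by (auto simp: trunc_equiv_def)
next
  fix xs es fs
  assume uv: "(u, v) = (pw xs es, pw xs fs)"
    and conds: "let m = length xs; e = sum_list es; f = sum_list fs in
        m \<ge> 1 \<and> distinct xs \<and> length es = m \<and> length fs = m
        \<and> (\<forall>i<m. es ! i \<ge> 1 \<and> fs ! i \<ge> 1)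
        \<and> e = f \<and> e < n
        \<and> (\<forall>k<m. es ! k = fs ! k \<or> (e + es ! k \<ge> n \<and> f + fs ! k \<ge> n))"
  from uv have u: "u = pw xs es" and v: "v = pw xs fs" by simp_all
  have len: "length es = length xs" "length fs = length xs"
    using conds by (simp_all add: Let_def)
  note c = conds[unfolded Let_def sum_list_sum_nth atLeast0LessThan len]
  have "u \<noteq> []" "v \<noteq> []"
    using c pw_eq_Nil_iff[OF len(1)] pw_eq_Nil_iff[OF len(2)] by (auto simp: u v)
  moreover have "trunc_equiv n u v"
    unfolding trunc_equiv_def u v wsum_pw[OF len(1)] wsum_pw[OF len(2)]
  proof (intro allI impI)
    fix g :: "nat \<Rightarrow> nat"
    assume "\<forall>x. 1 \<le> g x"
    moreover have "(\<Sum>i<length xs. es ! i) = (\<Sum>i<length xs. fs ! i)"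
      and "\<forall>k<length xs. es ! k = fs ! k \<or>
             (n \<le> (\<Sum>i<length xs. es ! i) + es ! k \<and> n \<le> (\<Sum>i<length xs. fs ! i) + fs ! k)"
      using c by blast+
    ultimately show "min (\<Sum>i<length xs. es ! i * g (xs ! i)) n = min (\<Sum>i<length xs. fs ! i * g (xs ! i)) n"
      by (intro min_weighted_sums_eq) simp_all
  qed
  ultimately show ?thesis by blast
qed

lemma derivable_sound:
  assumes "1 \<le> n" "derivable (Sigma_N n) u v"
  shows "u \<noteq> [] \<and> v \<noteq> [] \<and> trunc_equiv n u v"
  using assms(2)
proof (induction rule: derivable.induct)
  case (ax u v)
  then show ?case by (rule Sigma_N_sound[OF assms(1)])
next
  case (subst u v \<sigma>)
  then show ?case
    by (auto simp: subst_word_def trunc_equiv_subst[unfolded subst_word_def])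
next
  case (mult u v u' v')
  then show ?case by (simp add: trunc_equiv_append)
qed (auto simp: trunc_equiv_def)

lemma derivable_swap:
  assumes "u \<noteq> []" "v \<noteq> []"
  shows "derivable (Sigma_N n) (u @ v) (v @ u)"
proof -
  define \<sigma> where "\<sigma> = (\<lambda>i::nat. if i = 0 then u else v)"
  have "([0, 1], [1, 0]) \<in> Sigma_N n"
    unfolding Sigma_N_def by auto
  then have "derivable (Sigma_N n) (subst_word \<sigma> [0, 1]) (subst_word \<sigma> [1, 0])"
    using assms by (intro derivable.subst derivable.ax) (auto simp: \<sigma>_def)
  then show ?thesis by (simp add: subst_word_def \<sigma>_def)
qed

lemma derivable_context:
  assumes "derivable \<Sigma> u v"
  shows "derivable \<Sigma> (a @ u @ b) (a @ v @ b)"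
proof -
  have "derivable \<Sigma> (u @ b) (v @ b)"
    using assms derivable.mult[OF assms derivable.refl, of b] by (cases "b = []") auto
  then show ?thesis
    using derivable.mult[OF derivable.refl, of a] by (cases "a = []") auto
qed

lemma derivable_mset_eq:
  assumes "u \<noteq> []" "mset u = mset w"
  shows "derivable (Sigma_N n) u w"
  using assms
proof (induction u arbitrary: w)
  case (Cons x u)
  then have "x \<in> set w" by (metis list.set_intros(1) set_mset_mset)
  then obtain w1 w2 where w: "w = w1 @ x # w2" by (meson split_list)
  with Cons.prems have u: "mset u = mset (w1 @ w2)" by simp
  show ?case
  proof (cases "u = []")
    case True
    with u w show ?thesis by (simp add: derivable.refl)
  next
    case False
    have "derivable (Sigma_N n) ([x] @ u @ []) ([x] @ (w1 @ w2) @ [])"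
      by (rule derivable_context[OF Cons.IH[OF False u]])
    moreover have "derivable (Sigma_N n) (x # w1 @ w2) (w1 @ x # w2)"
    proof (cases "w1 = []")
      case False
      then show ?thesis
        using derivable_context[OF derivable_swap[of "[x]" w1], where a = "[]" and b = w2] by simp
    qed (simp add: derivable.refl)
    ultimately show ?thesis
      using w by (auto intro: derivable.trans)
  qed
qed simp

text \<open>Substitute \<open>[0]\<close> for \<open>x\<close>, the first \<open>n - 1\<close> letters of \<open>w\<close> for \<open>y\<^sub>1, \<dots>, y\<^bsub>n-1\<^esub>\<close> and the
  rest of \<open>w\<close> for \<open>y\<^sub>n\<close> in \<open>x\<^sup>n \<approx> y\<^sub>1 \<cdots> y\<^sub>n\<close>.\<close>
lemma derivable_long:
  assumes "1 \<le> n" "n \<le> length w"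
  shows "derivable (Sigma_N n) (replicate n 0) w"
proof -
  define \<sigma> where
    "\<sigma> = (\<lambda>i::nat. if i = 0 then [0] else if i < n then [w ! (i - 1)] else drop (n - 1) w)"
  have "(replicate n 0, [1..<Suc n]) \<in> Sigma_N n"
    unfolding Sigma_N_def by auto
  then have "derivable (Sigma_N n) (subst_word \<sigma> (replicate n 0)) (subst_word \<sigma> [1..<Suc n])"
    using assms by (intro derivable.subst derivable.ax) (auto simp: \<sigma>_def)
  moreover have "subst_word \<sigma> (replicate n 0) = replicate n 0"
    by (simp add: subst_word_def \<sigma>_def concat_replicate_single)
  moreover have "concat (map \<sigma> [1..<n]) = take (n - 1) w"
  proof -
    have singletons: "concat (map (\<lambda>x. [f x]) xs) = map f xs" for f :: "nat \<Rightarrow> nat" and xs :: "nat list"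
      by (induction xs) auto
    have letters: "map \<sigma> [1..<n] = map (\<lambda>i. [w ! (i - 1)]) [1..<n]"
      by (simp add: \<sigma>_def)
    have "concat (map \<sigma> [1..<n]) = map (\<lambda>i. w ! (i - 1)) [1..<n]"
      by (simp only: letters singletons)
    then show ?thesis
      using assms by (auto intro!: nth_equalityI)
  qed
  then have "subst_word \<sigma> [1..<Suc n] = w"
    using assms by (simp add: subst_word_def \<sigma>_def)
  ultimately show ?thesis by simp
qed

lemma trunc_equiv_sym: "trunc_equiv n u v \<Longrightarrow> trunc_equiv n v u"
  by (simp add: trunc_equiv_def)

lemma trunc_equiv_length: "trunc_equiv n u v \<Longrightarrow> min (length u) n = min (length v) n"
  unfolding trunc_equiv_def by (drule spec[of _ "\<lambda>_. 1"]) (simp add: sum_list_triv)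

lemma wsum_mark: "wsum (\<lambda>x. if x = y then 2 else 1) u = length u + count_list u y"
  by (induction u) auto

lemma trunc_equiv_count:
  "trunc_equiv n u v \<Longrightarrow> min (length u + count_list u y) n = min (length v + count_list v y) n"
  unfolding trunc_equiv_def by (drule spec[of _ "\<lambda>x. if x = y then 2 else 1"]) (simp add: wsum_mark)

text \<open>Give a letter of \<open>v\<close> missing from \<open>u\<close> the weight \<open>n\<close>.\<close>
lemma trunc_equiv_set_subset:
  assumes "trunc_equiv n u v" "length u < n"
  shows "set v \<subseteq> set u"
proof
  fix y
  assume y: "y \<in> set v"
  show "y \<in> set u"
  proof (rule ccontr)
    assume "y \<notin> set u"
    define g where "g = (\<lambda>x. if x = y then n else 1)"
    have "wsum g u = length u"
      using \<open>y \<notin> set u\<close> by (induction u) (auto simp: g_def)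
    moreover have "n \<le> wsum g v"
      using y member_le_sum_list[of "g y" "map g v"] by (simp add: g_def)
    moreover have "min (wsum g u) n = min (wsum g v) n"
      using assms(1,2) by (simp add: trunc_equiv_def g_def)
    ultimately show False
      using assms(2) by simp
  qed
qed

lemma mset_pw_count_list:
  assumes "distinct xs" "set xs = set w"
  shows "mset (pw xs (map (count_list w) xs)) = mset w"
proof -
  have "count (mset (pw xs (map (count_list w) xs))) y = (if y \<in> set xs then count_list w y else 0)"
    for y using assms(1) by (induction xs) (auto simp: pw_def)
  then show ?thesis
    using assms(2) by (auto simp: multiset_eq_iff count_mset)
qed

lemma pw_mem_Sigma_N:
  assumes "1 \<le> length xs" "distinct xs" "length es = length xs" "length fs = length xs"
    "\<forall>i<length xs. 1 \<le> es ! i \<and> 1 \<le> fs ! i"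
    "sum_list es = sum_list fs" "sum_list es < n"
    "\<forall>k<length xs. es ! k = fs ! k \<or> (n \<le> sum_list es + es ! k \<and> n \<le> sum_list fs + fs ! k)"
  shows "(pw xs es, pw xs fs) \<in> Sigma_N n"
  unfolding Sigma_N_def using assms
  by (intro UnI2 CollectI exI[of _ xs] exI[of _ es] exI[of _ fs]) (simp add: Let_def)

lemma trunc_equiv_set_eq:
  assumes "trunc_equiv n u v" "length u < n"
  shows "set u = set v"
proof -
  have "length v = length u"
    using trunc_equiv_length[OF assms(1)] assms(2) by linarith
  then show ?thesis
    using trunc_equiv_set_subset[OF assms] trunc_equiv_set_subset[OF trunc_equiv_sym[OF assms(1)]]
      assms(2) by auto
qed

lemma trunc_equiv_pw_mem_Sigma_N:
  assumes "trunc_equiv n u v" "length u < n" "u \<noteq> []"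
  defines "xs \<equiv> remdups u"
  shows "(pw xs (map (count_list u) xs), pw xs (map (count_list v) xs)) \<in> Sigma_N n"
    (is "(pw xs ?es, pw xs ?fs) \<in> _")
proof (rule pw_mem_Sigma_N)
  have set_xs: "set xs = set u" "set xs = set v"
    using trunc_equiv_set_eq[OF assms(1,2)] by (simp_all add: xs_def)
  have lengths: "length v = length u"
    using trunc_equiv_length[OF assms(1)] assms(2) by linarith
  have sums: "sum_list ?es = length u" "sum_list ?fs = length v"
    using length_pw[of ?es xs] length_pw[of ?fs xs] mset_pw_count_list[of xs u]
      mset_pw_count_list[of xs v] set_xs by (simp_all add: xs_def flip: size_mset)
  show "1 \<le> length xs" "distinct xs" "length ?es = length xs" "length ?fs = length xs"
    using assms(3) by (simp_all add: xs_def Suc_le_eq)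
  show "sum_list ?es = sum_list ?fs" "sum_list ?es < n"
    using sums lengths assms(2) by simp_all
  show "\<forall>i<length xs. 1 \<le> ?es ! i \<and> 1 \<le> ?fs ! i"
  proof (intro allI impI)
    fix i
    assume i: "i < length xs"
    then have "xs ! i \<in> set u" "xs ! i \<in> set v"
      using set_xs nth_mem by blast+
    then have "count_list u (xs ! i) \<noteq> 0" "count_list v (xs ! i) \<noteq> 0"
      by (simp_all add: count_list_0_iff)
    with i show "1 \<le> ?es ! i \<and> 1 \<le> ?fs ! i"
      by simp
  qed
  show "\<forall>k<length xs. ?es ! k = ?fs ! k \<or> (n \<le> sum_list ?es + ?es ! k \<and> n \<le> sum_list ?fs + ?fs ! k)"
  proof (intro allI impI)
    fix k
    assume "k < length xs"
    then have "min (sum_list ?es + ?es ! k) n = min (sum_list ?fs + ?fs ! k) n"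
      using trunc_equiv_count[OF assms(1), of "xs ! k"] sums by simp
    then show "?es ! k = ?fs ! k \<or> (n \<le> sum_list ?es + ?es ! k \<and> n \<le> sum_list ?fs + ?fs ! k)"
      using sums lengths assms(2) by (auto simp: min_def split: if_splits)
  qed
qed

lemma derivable_complete:
  assumes "1 \<le> n" "u \<noteq> []" "v \<noteq> []" "trunc_equiv n u v"
  shows "derivable (Sigma_N n) u v"
proof (cases "n \<le> length u")
  case True
  then have "n \<le> length v"
    using trunc_equiv_length[OF assms(4)] by linarith
  then show ?thesis
    using derivable_long[OF assms(1) True] derivable_long[OF assms(1)]
    by (metis derivable.sym derivable.trans)
next
  case False
  define xs where "xs = remdups u"
  have "set xs = set u" "set xs = set v"
    using trunc_equiv_set_eq[OF assms(4)] False by (simp_all add: xs_def)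
  then have "derivable (Sigma_N n) u (pw xs (map (count_list u) xs))"
    and "derivable (Sigma_N n) v (pw xs (map (count_list v) xs))"
    using assms(2,3) by (simp_all add: derivable_mset_eq mset_pw_count_list xs_def)
  moreover have "derivable (Sigma_N n) (pw xs (map (count_list u) xs)) (pw xs (map (count_list v) xs))"
    using trunc_equiv_pw_mem_Sigma_N[OF assms(4) _ assms(2)] False
    by (simp add: xs_def derivable.ax)
  ultimately show ?thesis
    by (metis derivable.sym derivable.trans)
qed

lemma eq_theory_Nn:
  assumes "1 \<le> n"
  shows "eq_theory (Nn n) = {(u, v). derivable (Sigma_N n) u v}"
proof (intro set_eqI iffI; clarify)
  fix u v
  assume "(u, v) \<in> eq_theory (Nn n)"
  then have "u \<noteq> []" "v \<noteq> []" "trunc_equiv n u v"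
    using satisfies_Nn_iff[OF assms] by (auto simp: eq_theory_def)
  then show "derivable (Sigma_N n) u v"
    by (rule derivable_complete[OF assms])
next
  fix u v
  assume "derivable (Sigma_N n) u v"
  then show "(u, v) \<in> eq_theory (Nn n)"
    using satisfies_Nn_iff[OF assms] derivable_sound[OF assms] by (simp add: eq_theory_def)
qed

section \<open>Powers and power identities\<close>

fun sg_pow :: "sg \<Rightarrow> nat \<Rightarrow> nat \<Rightarrow> nat" where
  "sg_pow S a 0 = a" \<comment> \<open>junk: only exponents \<open>\<ge> 1\<close> are meaningful\<close>
| "sg_pow S a (Suc 0) = a"
| "sg_pow S a (Suc (Suc k)) = mul S a (sg_pow S a (Suc k))"

definition pow_identity :: "sg \<Rightarrow> nat \<Rightarrow> nat \<Rightarrow> bool" where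
  "pow_identity S p q \<longleftrightarrow> (\<forall>a\<in>carr S. sg_pow S a p = sg_pow S a q)"

lemma weval_replicate: "weval S \<phi> (replicate (Suc k) x) = sg_pow S (\<phi> x) (Suc k)"
  by (induction k) auto

lemma satisfies_replicate_iff:
  assumes "1 \<le> p" "1 \<le> q"
  shows "satisfies S (replicate p x, replicate q x) \<longleftrightarrow> pow_identity S p q"
proof -
  obtain p' q' where pq: "p = Suc p'" "q = Suc q'"
    using assms by (metis Suc_le_D One_nat_def)
  show ?thesis
  proof
    assume sat: "satisfies S (replicate p x, replicate q x)"
    show "pow_identity S p q"
      unfolding pow_identity_def
    proof
      fix a
      assume "a \<in> carr S"
      then have "weval S (\<lambda>_. a) (replicate p x) = weval S (\<lambda>_. a) (replicate q x)"
        using sat by (simp add: satisfies_def)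
      then show "sg_pow S a p = sg_pow S a q"
        unfolding pq weval_replicate .
    qed
  next
    assume "pow_identity S p q"
    then show "satisfies S (replicate p x, replicate q x)"
      unfolding satisfies_def pow_identity_def pq by (simp add: weval_replicate del: replicate_Suc)
  qed
qed

lemma sg_pow_Suc: "1 \<le> k \<Longrightarrow> sg_pow S a (Suc k) = mul S a (sg_pow S a k)"
  by (cases k) auto

lemma sg_pow_closed: "fin_semigroup S \<Longrightarrow> a \<in> carr S \<Longrightarrow> sg_pow S a k \<in> carr S"
  by (induction S a k rule: sg_pow.induct) (auto simp: fin_semigroup_def)

lemma sg_pow_add:
  assumes "fin_semigroup S" "a \<in> carr S" "1 \<le> i" "1 \<le> j"
  shows "sg_pow S a (i + j) = mul S (sg_pow S a i) (sg_pow S a j)"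
  using assms(3)
proof (induction i rule: nat_induct_at_least)
  case base
  then show ?case using assms(4) by (simp add: sg_pow_Suc)
next
  case (Suc i)
  have "sg_pow S a (Suc i + j) = mul S a (mul S (sg_pow S a i) (sg_pow S a j))"
    using Suc by (simp add: sg_pow_Suc)
  also have "\<dots> = mul S (mul S a (sg_pow S a i)) (sg_pow S a j)"
    using assms(1,2) sg_pow_closed[OF assms(1,2)] by (simp add: fin_semigroup_def)
  finally show ?case using Suc by (simp add: sg_pow_Suc)
qed

lemma sg_pow_subsg: "subsg T S \<Longrightarrow> a \<in> carr T \<Longrightarrow> sg_pow T a k = sg_pow S a k"
proof (induction T a k rule: sg_pow.induct)
  case (3 T a k)
  have "sg_pow T a (Suc k) \<in> carr T"
    by (rule sg_pow_closed) (use 3(2,3) in \<open>simp_all add: subsg_def\<close>)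
  with 3 show ?case by (simp add: subsg_def)
qed auto

lemma sg_pow_hom:
  assumes "fin_semigroup S" "\<forall>x\<in>carr S. \<forall>y\<in>carr S. h (mul S x y) = mul T (h x) (h y)"
    "a \<in> carr S"
  shows "h (sg_pow S a k) = sg_pow T (h a) k"
  using assms
  by (induction S a k rule: sg_pow.induct) (simp_all add: sg_pow_closed)

lemma sg_pow_prod_sg:
  "sg_pow (prod_sg S T) (prod_encode (a, b)) k = prod_encode (sg_pow S a k, sg_pow T b k)"
  by (induction "prod_sg S T" "prod_encode (a, b)" k rule: sg_pow.induct)
    (simp_all add: prod_sg_def)

lemma pseudovarietyD:
  assumes "pseudovariety V"
  shows pseudovariety_fin_semigroup: "S \<in> V \<Longrightarrow> fin_semigroup S"
    and pseudovariety_prod_sg: "S \<in> V \<Longrightarrow> T \<in> V \<Longrightarrow> prod_sg S T \<in> V"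
    and pseudovariety_subsg: "S \<in> V \<Longrightarrow> subsg T S \<Longrightarrow> T \<in> V"
    and pseudovariety_hom_image: "S \<in> V \<Longrightarrow> fin_semigroup T \<Longrightarrow> hom_image T S \<Longrightarrow> T \<in> V"
  using assms unfolding pseudovariety_def by blast+

lemma pseudovarietyI:
  assumes "V \<noteq> {}" "\<And>S. S \<in> V \<Longrightarrow> fin_semigroup S"
    "\<And>S T. S \<in> V \<Longrightarrow> T \<in> V \<Longrightarrow> prod_sg S T \<in> V"
    "\<And>S T. S \<in> V \<Longrightarrow> subsg T S \<Longrightarrow> T \<in> V"
    "\<And>S T. S \<in> V \<Longrightarrow> fin_semigroup T \<Longrightarrow> hom_image T S \<Longrightarrow> T \<in> V"
  shows "pseudovariety V"
  using assms unfolding pseudovariety_def by blast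

lemma pseudovariety_Inter:
  assumes "\<And>V. V \<in> \<V> \<Longrightarrow> pseudovariety V" "\<V> \<noteq> {}" "\<Inter>\<V> \<noteq> {}"
  shows "pseudovariety (\<Inter>\<V>)"
  using assms by (intro pseudovarietyI) (auto intro: pseudovarietyD)

lemma pseudovariety_Int:
  assumes "pseudovariety V" "pseudovariety W" "V \<inter> W \<noteq> {}"
  shows "pseudovariety (V \<inter> W)"
  using assms pseudovariety_Inter[of "{V, W}"] by auto

lemma gen_pv_least: "pseudovariety V \<Longrightarrow> S \<in> V \<Longrightarrow> gen_pv S \<subseteq> V"
  unfolding gen_pv_def by blast

lemma mem_gen_pv: "S \<in> gen_pv S"
  unfolding gen_pv_def by blast

lemma pseudovariety_gen_pv:
  assumes "pseudovariety V" "S \<in> V"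
  shows "pseudovariety (gen_pv S)"
  using assms mem_gen_pv[of S] unfolding gen_pv_def by (intro pseudovariety_Inter) auto

lemma fin_semigroup_prod_sg:
  "fin_semigroup S \<Longrightarrow> fin_semigroup T \<Longrightarrow> fin_semigroup (prod_sg S T)"
  unfolding fin_semigroup_def prod_sg_def by auto

lemma pow_identity_prod_sg:
  assumes "pow_identity S p q" "pow_identity T p q"
  shows "pow_identity (prod_sg S T) p q"
  unfolding pow_identity_def
proof
  fix z
  assume "z \<in> carr (prod_sg S T)"
  then obtain a b where "z = prod_encode (a, b)" "a \<in> carr S" "b \<in> carr T"
    by (auto simp: prod_sg_def)
  then show "sg_pow (prod_sg S T) z p = sg_pow (prod_sg S T) z q"
    using assms by (simp add: pow_identity_def sg_pow_prod_sg)
qed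

lemma pow_identity_subsg:
  assumes "subsg T S" "pow_identity S p q"
  shows "pow_identity T p q"
  unfolding pow_identity_def
proof
  fix a
  assume "a \<in> carr T"
  moreover from this have "a \<in> carr S"
    using assms(1) by (auto simp: subsg_def)
  ultimately show "sg_pow T a p = sg_pow T a q"
    using assms by (simp add: pow_identity_def sg_pow_subsg)
qed

lemma pow_identity_hom_image:
  assumes "fin_semigroup S" "hom_image T S" "pow_identity S p q"
  shows "pow_identity T p q"
proof -
  obtain h where h: "h ` carr S = carr T"
    and hom: "\<forall>x\<in>carr S. \<forall>y\<in>carr S. h (mul S x y) = mul T (h x) (h y)"
    using assms(2) by (auto simp: hom_image_def)
  show ?thesis
    unfolding pow_identity_def
  proof
    fix b
    assume "b \<in> carr T"
    then obtain a where "a \<in> carr S" "b = h a"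
      using h by auto
    then show "sg_pow T b p = sg_pow T b q"
      using assms(3) sg_pow_hom[OF assms(1) hom] by (metis pow_identity_def)
  qed
qed

definition trivial_sg :: sg where
  "trivial_sg = \<lparr>carr = {0}, mul = (\<lambda>_ _. 0)\<rparr>"

lemma fin_semigroup_trivial_sg: "fin_semigroup trivial_sg"
  by (simp add: fin_semigroup_def trivial_sg_def)

lemma pow_identity_trivial_sg: "pow_identity trivial_sg p q"
proof -
  have "sg_pow trivial_sg 0 k = 0" for k
    by (induction trivial_sg "0::nat" k rule: sg_pow.induct) (simp_all add: trivial_sg_def)
  then show ?thesis by (simp add: pow_identity_def trivial_sg_def)
qed

lemma pseudovariety_pow_identity: "pseudovariety {T. fin_semigroup T \<and> pow_identity T p q}"
proof (rule pseudovarietyI)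
  show "{T. fin_semigroup T \<and> pow_identity T p q} \<noteq> {}"
    using fin_semigroup_trivial_sg pow_identity_trivial_sg by blast
  show "T \<in> {T. fin_semigroup T \<and> pow_identity T p q}"
    if "S \<in> {T. fin_semigroup T \<and> pow_identity T p q}" "subsg T S" for S T
    using that pow_identity_subsg[OF that(2)] by (simp add: subsg_def)
qed (auto intro: fin_semigroup_prod_sg pow_identity_prod_sg pow_identity_hom_image)

lemma hom_image_trivial_sg: "carr S \<noteq> {} \<Longrightarrow> hom_image trivial_sg S"
  unfolding hom_image_def trivial_sg_def by (intro exI[of _ "\<lambda>_. 0"]) auto

lemma maximal_subpv_unique:
  assumes "pseudovariety V" "V \<subset> W"
    and "\<And>U. pseudovariety U \<Longrightarrow> U \<subseteq> W \<Longrightarrow> \<not> U \<subseteq> V \<Longrightarrow> W \<subseteq> U"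
  shows "maximal_subpv V W \<and> (\<forall>V'. maximal_subpv V' W \<longrightarrow> V' = V)"
proof (intro conjI allI impI)
  show "maximal_subpv V W"
    unfolding maximal_subpv_def using assms by blast
  fix V'
  assume V': "maximal_subpv V' W"
  then have "V' \<subseteq> V"
    using assms(3) unfolding maximal_subpv_def by blast
  then show "V' = V"
    using V' assms(1,2) unfolding maximal_subpv_def by blast
qed

section \<open>The maximal subpseudovariety of \<open>\<lbrakk>N\<^sub>n\<rbrakk>\<close>\<close>

lemma fin_semigroup_Nn: "1 \<le> n \<Longrightarrow> fin_semigroup (Nn n)"
  unfolding fin_semigroup_def Nn_def by auto

lemma sg_pow_Nn:
  assumes "a \<in> {1..n}" "1 \<le> k"
  shows "sg_pow (Nn n) a k = min (k * a) n"
  using assms(2)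
proof (induction k rule: nat_induct_at_least)
  case (Suc k)
  then show ?case using assms(1) by (simp add: sg_pow_Suc Nn_def min_def)
qed (use assms(1) in simp)

lemma pow_identity_Nn:
  assumes "1 \<le> n"
  shows "pow_identity (Nn n) (n + 1) n"
  unfolding pow_identity_def
proof
  fix a
  assume "a \<in> carr (Nn n)"
  then have a: "a \<in> {1..n}" by (simp add: Nn_def)
  then have "n \<le> n * a" "n \<le> (n + 1) * a"
    using mult_le_mono2[of 1 a n] mult_le_mono2[of 1 a "n + 1"] by simp_all
  moreover have "sg_pow (Nn n) a (n + 1) = min ((n + 1) * a) n"
    by (rule sg_pow_Nn[OF a]) simp
  moreover have "sg_pow (Nn n) a n = min (n * a) n"
    by (rule sg_pow_Nn[OF a assms])
  ultimately show "sg_pow (Nn n) a (n + 1) = sg_pow (Nn n) a n"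
    by (simp only: min_absorb2)
qed

lemma not_pow_identity_Nn: "2 \<le> n \<Longrightarrow> \<not> pow_identity (Nn n) n (n - 1)"
  unfolding pow_identity_def
proof
  assume "2 \<le> n" "\<forall>a\<in>carr (Nn n). sg_pow (Nn n) a n = sg_pow (Nn n) a (n - 1)"
  then have "sg_pow (Nn n) 1 n = sg_pow (Nn n) 1 (n - 1)"
    by (simp add: Nn_def)
  with \<open>2 \<le> n\<close> show False
    by (simp add: sg_pow_Nn)
qed

lemma sg_pow_eq_above:
  assumes "fin_semigroup T" "a \<in> carr T" "pow_identity T (n + 1) n" "1 \<le> n" "n \<le> i"
  shows "sg_pow T a i = sg_pow T a n"
  using assms(5)
proof (induction i rule: nat_induct_at_least)
  case (Suc i)
  have "sg_pow T a (Suc i) = mul T a (sg_pow T a n)"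
    using Suc assms(4) by (simp add: sg_pow_Suc)
  also have "\<dots> = sg_pow T a (n + 1)"
    using assms(4) by (simp add: sg_pow_Suc)
  finally show ?case
    using assms(2,3) by (simp add: pow_identity_def)
qed simp

text \<open>If \<open>a\<^sup>i = a\<^sup>j\<close> with \<open>i < j \<le> n\<close>, multiplying by \<open>a\<^bsup>n-1-i\<^esup>\<close> gives \<open>a\<^bsup>n-1\<^esup> = a\<^sup>n\<close>.\<close>
lemma inj_on_sg_pow:
  assumes T: "fin_semigroup T" "a \<in> carr T" "pow_identity T (n + 1) n" "1 \<le> n"
    and neq: "sg_pow T a n \<noteq> sg_pow T a (n - 1)"
  shows "inj_on (sg_pow T a) {1..n}"
proof -
  have "sg_pow T a i \<noteq> sg_pow T a j" if ij: "1 \<le> i" "i < j" "j \<le> n" for i j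
  proof
    assume eq: "sg_pow T a i = sg_pow T a j"
    have "sg_pow T a (n - 1) = sg_pow T a n"
    proof (cases "i = n - 1")
      case True
      with ij have "j = n" by simp
      with True eq show ?thesis by simp
    next
      case False
      define d where "d = n - 1 - i"
      have d: "1 \<le> d" "n - 1 = d + i" "n \<le> d + j"
        using False ij by (simp_all add: d_def)
      have "sg_pow T a (n - 1) = mul T (sg_pow T a d) (sg_pow T a i)"
        using sg_pow_add[OF T(1,2) d(1) ij(1)] d(2) by simp
      also have "\<dots> = sg_pow T a (d + j)"
        using sg_pow_add[OF T(1,2) d(1), of j] eq ij by simp
      also have "\<dots> = sg_pow T a n"
        using sg_pow_eq_above[OF T d(3)] .
      finally show ?thesis .
    qed
    with neq show False by simp
  qed
  then show ?thesis
    by (intro inj_onI) (metis atLeastAtMost_iff linorder_neqE_nat)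
qed

lemma mul_sg_pow_truncated:
  assumes "fin_semigroup T" "a \<in> carr T" "pow_identity T (n + 1) n" "1 \<le> n"
    and "i \<in> {1..n}" "j \<in> {1..n}"
  shows "mul T (sg_pow T a i) (sg_pow T a j) = sg_pow T a (min (i + j) n)"
  using assms(5,6) sg_pow_add[OF assms(1,2), of i j] sg_pow_eq_above[OF assms(1-4), of "i + j"]
  by (simp add: min_def)

definition powers_sg :: "sg \<Rightarrow> nat \<Rightarrow> nat \<Rightarrow> sg" where
  "powers_sg T a n = \<lparr>carr = sg_pow T a ` {1..n}, mul = mul T\<rparr>"

lemma subsg_powers_sg:
  assumes T: "fin_semigroup T" "a \<in> carr T" "pow_identity T (n + 1) n" "1 \<le> n"
  shows "subsg (powers_sg T a n) T"
proof -
  have "carr (powers_sg T a n) \<subseteq> carr T"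
    using sg_pow_closed[OF T(1,2)] by (auto simp: powers_sg_def)
  moreover have "mul T x y \<in> carr (powers_sg T a n)"
    if "x \<in> carr (powers_sg T a n)" "y \<in> carr (powers_sg T a n)" for x y
    using that T(4) by (auto simp: powers_sg_def mul_sg_pow_truncated[OF T])
  ultimately show ?thesis
    using T(1,4) unfolding subsg_def fin_semigroup_def by (auto simp: powers_sg_def subset_iff)
qed

lemma hom_image_Nn_powers_sg:
  assumes T: "fin_semigroup T" "a \<in> carr T" "pow_identity T (n + 1) n" "1 \<le> n"
    and neq: "sg_pow T a n \<noteq> sg_pow T a (n - 1)"
  shows "hom_image (Nn n) (powers_sg T a n)"
  unfolding hom_image_def
proof (intro exI[of _ "the_inv_into {1..n} (sg_pow T a)"] conjI ballI)
  let ?h = "the_inv_into {1..n} (sg_pow T a)"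
  have inj: "inj_on (sg_pow T a) {1..n}"
    by (rule inj_on_sg_pow[OF T neq])
  show "?h ` carr (powers_sg T a n) = carr (Nn n)"
    using the_inv_into_onto[OF inj] by (simp add: powers_sg_def Nn_def)
  fix x y
  assume "x \<in> carr (powers_sg T a n)" "y \<in> carr (powers_sg T a n)"
  then obtain i j where ij: "i \<in> {1..n}" "j \<in> {1..n}" "x = sg_pow T a i" "y = sg_pow T a j"
    by (auto simp: powers_sg_def)
  have ij_trunc: "min (i + j) n \<in> {1..n}"
    using ij T(4) by auto
  have mul_ij: "mul (powers_sg T a n) (sg_pow T a i) (sg_pow T a j) = sg_pow T a (min (i + j) n)"
    using ij by (simp add: powers_sg_def mul_sg_pow_truncated[OF T])
  show "?h (mul (powers_sg T a n) x y) = mul (Nn n) (?h x) (?h y)"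
    unfolding ij(3,4) mul_ij the_inv_into_f_f[OF inj ij(1)] the_inv_into_f_f[OF inj ij(2)]
      the_inv_into_f_f[OF inj ij_trunc] by (simp add: Nn_def)
qed

lemma gen_pv_Nn_subset_if_not_pow_identity:
  assumes "1 \<le> n" "pseudovariety U" "U \<subseteq> {T. fin_semigroup T \<and> pow_identity T (n + 1) n}"
    and "T \<in> U" "\<not> pow_identity T n (n - 1)"
  shows "gen_pv (Nn n) \<subseteq> U"
proof -
  obtain a where a: "a \<in> carr T" "sg_pow T a n \<noteq> sg_pow T a (n - 1)"
    using assms(5) unfolding pow_identity_def by blast
  have T: "fin_semigroup T" "pow_identity T (n + 1) n"
    using assms(3,4) by blast+
  have "powers_sg T a n \<in> U"
    using pseudovariety_subsg[OF assms(2,4) subsg_powers_sg[OF T(1) a(1) T(2) assms(1)]] .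
  then have "Nn n \<in> U"
    using pseudovariety_hom_image[OF assms(2) _ fin_semigroup_Nn[OF assms(1)]]
      hom_image_Nn_powers_sg[OF T(1) a(1) T(2) assms(1) a(2)] by blast
  then show ?thesis
    by (rule gen_pv_least[OF assms(2)])
qed

lemma gen_pv_Nn_subset_pow_identity:
  assumes "1 \<le> n"
  shows "pseudovariety (gen_pv (Nn n))"
    and "gen_pv (Nn n) \<subseteq> {T. fin_semigroup T \<and> pow_identity T (n + 1) n}"
proof -
  have "Nn n \<in> {T. fin_semigroup T \<and> pow_identity T (n + 1) n}"
    using fin_semigroup_Nn[OF assms] pow_identity_Nn[OF assms] by simp
  then show "pseudovariety (gen_pv (Nn n))"
    and "gen_pv (Nn n) \<subseteq> {T. fin_semigroup T \<and> pow_identity T (n + 1) n}"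
    using pseudovariety_gen_pv gen_pv_least pseudovariety_pow_identity by blast+
qed

lemma maximal_subpv_gen_pv_Nn:
  assumes "2 \<le> n"
  defines "V \<equiv> gen_pv (Nn n) \<inter> {T. fin_semigroup T \<and> pow_identity T n (n - 1)}"
  shows "maximal_subpv V (gen_pv (Nn n)) \<and> (\<forall>V'. maximal_subpv V' (gen_pv (Nn n)) \<longrightarrow> V' = V)"
proof (rule maximal_subpv_unique)
  have n: "1 \<le> n" using assms(1) by simp
  note W = gen_pv_Nn_subset_pow_identity[OF n]
  have "trivial_sg \<in> gen_pv (Nn n)"
    using pseudovariety_hom_image[OF W(1) mem_gen_pv fin_semigroup_trivial_sg]
      hom_image_trivial_sg[of "Nn n"] n by (simp add: Nn_def)
  then show "pseudovariety V"
    unfolding V_def using W(1) fin_semigroup_trivial_sg pow_identity_trivial_sg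
    by (intro pseudovariety_Int pseudovariety_pow_identity) auto
  show "V \<subset> gen_pv (Nn n)"
    unfolding V_def using mem_gen_pv not_pow_identity_Nn[OF assms(1)] by blast
  show "gen_pv (Nn n) \<subseteq> U" if U: "pseudovariety U" "U \<subseteq> gen_pv (Nn n)" "\<not> U \<subseteq> V" for U
  proof -
    obtain T where "T \<in> U" "T \<notin> V" using U(3) by blast
    moreover from this have "fin_semigroup T" "T \<in> gen_pv (Nn n)"
      using U(2) W(2) by blast+
    ultimately have "\<not> pow_identity T n (n - 1)"
      unfolding V_def by blast
    then show ?thesis
      using gen_pv_Nn_subset_if_not_pow_identity[OF n U(1) order.trans[OF U(2) W(2)] \<open>T \<in> U\<close>] by blast
  qed
qed

theorem proposition5p8:
  fixes n :: nat
  assumes "n \<ge> 2"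
  shows "eq_theory (Nn n) = {(u, v). derivable (Sigma_N n) u v}
       \<and> maximal_subpv
           {T \<in> gen_pv (Nn n). satisfies T (replicate n 0, replicate (n - 1) 0)}
           (gen_pv (Nn n))
       \<and> (\<forall>V. maximal_subpv V (gen_pv (Nn n)) \<longrightarrow>
           V = {T \<in> gen_pv (Nn n). satisfies T (replicate n 0, replicate (n - 1) 0)})"
proof -
  have n: "1 \<le> n" using assms by simp
  have "{T \<in> gen_pv (Nn n). satisfies T (replicate n 0, replicate (n - 1) 0)}
      = gen_pv (Nn n) \<inter> {T. fin_semigroup T \<and> pow_identity T n (n - 1)}"
    using satisfies_replicate_iff[of n "n - 1"] gen_pv_Nn_subset_pow_identity(2)[OF n] assms
    by auto
  then show ?thesis
    using eq_theory_Nn[OF n] maximal_subpv_gen_pv_Nn[OF assms] by simp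
qed

end
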